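(* Let $(X,d)$ be a compact metric space and $f\colon X\to X$ a continuous map that is c-expansive or equicontinuous. (1) If $f$ has the limit shadowing property, then $f|_{\Omega(f)}\colon\Omega(f)\to\Omega(f)$ also has the limit shadowing property. (2) $f$ has the limit shadowing property if and only if $f$ has the thick shadowing property.
   Context: For a continuous surjection $f$, let $X_f=\{(x_i)_{i\in\mathbb{Z}}\in X^{\mathbb{Z}}: f(x_i)=x_{i+1}\ \forall i\}$; $f$ is c-expansive if there is $e>0$ such that for $(x_i),(y_i)\in X_f$, $d(x_i,y_i)\le e$ for all $i$ implies $(x_i)=(y_i)$. $f$ is equicontinuous if for every $\epsilon>0$ there is $\delta>0$ such that $d(x,y)\le\delta$ implies $\sup_{n\ge0}d(f^n(x),f^n(y))\le\epsilon$. Limit shadowing property: every sequence $(x_i)_{i\ge0}$ with $\lim_i d(f(x_i),x_{i+1})=0$ admits $y\in X$ with $\lim_i d(x_i,f^i(y))=0$. $\Omega(f)$ is the set of non-wandering points. Let $\mathbb{N}_0=\{0,1,\dots\}$, $\mathcal{D}=\{A\subset\mathbb{N}_0:\lim_n\frac1n|A\cap\{0,\dots,n-1\}|=1\}$, $\mathcal{F}_t=\{B\subset\mathbb{N}_0:\forall n\ \exists j,\ \{j,\dots,j+n\}\subset B\}$. $f$ has the thick shadowing property if for every $\epsilon>0$ there is $\delta>0$ such that every sequence $(x_i)_{i\ge0}$ with $\{i:d(f(x_i),x_{i+1})\le\delta\}\in\mathcal{D}$ admits $x\in X$ with $\{i:d(x_i,f^i(x))\le\epsilon\}\in\mathcal{F}_t$.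 *)

theory Defs
  imports "HOL-Analysis.Analysis"
begin

text \<open>All dynamical notions are taken relative to a set X (the phase space) on which
  f acts; this allows restricting f to the invariant subset of non-wandering points.\<close>

definition full_orbits :: "'a set \<Rightarrow> ('a \<Rightarrow> 'a) \<Rightarrow> (int \<Rightarrow> 'a) set" where
  "full_orbits X f = {x. (\<forall>i. x i \<in> X) \<and> (\<forall>i. f (x i) = x (i + 1))}"

definition c_expansive :: "'a::metric_space set \<Rightarrow> ('a \<Rightarrow> 'a) \<Rightarrow> bool" where
  "c_expansive X f \<longleftrightarrow> (\<exists>e>0. \<forall>x\<in>full_orbits X f. \<forall>y\<in>full_orbits X f.
      (\<forall>i. dist (x i) (y i) \<le> e) \<longrightarrow> x = y)"

definition equicontinuous :: "'a::metric_space set \<Rightarrow> ('a \<Rightarrow> 'a) \<Rightarrow> bool" where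
  "equicontinuous X f \<longleftrightarrow> (\<forall>\<epsilon>>0. \<exists>\<delta>>0. \<forall>x\<in>X. \<forall>y\<in>X.
      dist x y \<le> \<delta> \<longrightarrow> (\<forall>n. dist ((f ^^ n) x) ((f ^^ n) y) \<le> \<epsilon>))"

definition limit_shadowing :: "'a::metric_space set \<Rightarrow> ('a \<Rightarrow> 'a) \<Rightarrow> bool" where
  "limit_shadowing X f \<longleftrightarrow> (\<forall>x :: nat \<Rightarrow> 'a. (\<forall>i. x i \<in> X) \<and>
      (\<lambda>i. dist (f (x i)) (x (Suc i))) \<longlonglongrightarrow> 0 \<longrightarrow>
      (\<exists>y\<in>X. (\<lambda>i. dist (x i) ((f ^^ i) y)) \<longlonglongrightarrow> 0))"

definition nonwandering :: "'a::metric_space set \<Rightarrow> ('a \<Rightarrow> 'a) \<Rightarrow> 'a set" where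
  "nonwandering X f = {x\<in>X. \<forall>U. openin (top_of_set X) U \<and> x \<in> U \<longrightarrow>
      (\<exists>n\<ge>1. (f ^^ n) ` U \<inter> U \<noteq> {})}"

definition density_one :: "nat set \<Rightarrow> bool" where
  "density_one A \<longleftrightarrow> (\<lambda>n. real (card (A \<inter> {..<n})) / real n) \<longlonglongrightarrow> 1"

definition thick :: "nat set \<Rightarrow> bool" where
  "thick B \<longleftrightarrow> (\<forall>n. \<exists>j. {j..j+n} \<subseteq> B)"

definition thick_shadowing :: "'a::metric_space set \<Rightarrow> ('a \<Rightarrow> 'a) \<Rightarrow> bool" where
  "thick_shadowing X f \<longleftrightarrow> (\<forall>\<epsilon>>0. \<exists>\<delta>>0. \<forall>x :: nat \<Rightarrow> 'a. (\<forall>i. x i \<in> X) \<and>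
      density_one {i. dist (f (x i)) (x (Suc i)) \<le> \<delta>} \<longrightarrow>
      (\<exists>z\<in>X. thick {i. dist (x i) ((f ^^ i) z) \<le> \<epsilon>}))"

end

theory Submission
  imports Defs
begin

text \<open>Under either hypothesis, all three shadowing properties are tied together by
  periodic shadowing: for every \<open>\<epsilon> > 0\<close> there is \<open>\<delta> > 0\<close> such that every periodic
  \<open>\<delta>\<close>-pseudo-orbit is \<open>\<epsilon>\<close>-shadowed along one period.

  Limit shadowing implies periodic shadowing: otherwise, concatenating unshadowable periodic
  \<open>\<delta>\<^sub>k\<close>-pseudo-orbits with \<open>\<delta>\<^sub>k \<rightarrow> 0\<close> (and converging initial points) yields an asymptotic
  pseudo-orbit that is not limit shadowed. Thick shadowing implies it as well, since a periodic
  pseudo-orbit has no bad jumps at all.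

  Conversely, closing up long tail segments of an asymptotic pseudo-orbit into periodic
  pseudo-orbits and taking limits of their shadowing points gives, for each \<open>\<epsilon>\<close>, a non-wandering
  point that eventually \<open>\<epsilon>\<close>-shadows it; c-expansivity (close orbits are asymptotic) or
  equicontinuity turns these into a single non-wandering point that limit shadows it. This gives
  part (1), and limit shadowing from periodic shadowing. For thick shadowing, a density-one set of good times contains a
  short good cycle and arbitrarily long good blocks whose ends are close to the start of the
  cycle and congruent modulo its length; gluing the blocks with copies of the cycle produces a
  pseudo-orbit which keeps returning to its start, and so is shadowed by a single point.\<close>

section \<open>Density-one and thick sets\<close>

lemma density_one_UNIV: "density_one UNIV"
  unfolding density_one_def
  by (rule tendsto_eventually, rule eventually_sequentiallyI[of 1]) auto

lemma card_block_le_if_not_subset: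
  assumes "\<not> {j..j+L} \<subseteq> A"
  shows "card (A \<inter> {j..<j + Suc L}) \<le> L"
proof -
  obtain t where t: "t \<in> {j..j+L}" "t \<notin> A" using assms by blast
  then have "A \<inter> {j..<j + Suc L} \<subseteq> {j..<j + Suc L} - {t}" by auto
  then have "card (A \<inter> {j..<j + Suc L}) \<le> card ({j..<j + Suc L} - {t})" by (intro card_mono) auto
  also have "\<dots> = L" using t by simp
  finally show ?thesis .
qed

text \<open>A set missing a point in every block of length \<open>L + 1\<close> has upper density at most
  \<open>L / (L + 1)\<close>.\<close>
lemma density_one_imp_thick:
  assumes "density_one A"
  shows "thick A"
  unfolding thick_def
proof (rule ccontr)
  assume "\<not> (\<forall>L. \<exists>j. {j..j+L} \<subseteq> A)"
  then obtain L where gaps: "\<And>j. \<not> {j..j+L} \<subseteq> A" by blast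
  define W where "W = Suc L"
  have count: "card (A \<inter> {..<m*W}) \<le> m*L" for m
  proof (induction m)
    case (Suc m)
    have "A \<inter> {..<Suc m * W} = (A \<inter> {..<m*W}) \<union> (A \<inter> {m*W..<m*W + Suc L})"
      by (auto simp: W_def)
    then have "card (A \<inter> {..<Suc m * W}) \<le> card (A \<inter> {..<m*W}) + card (A \<inter> {m*W..<m*W + Suc L})"
      by (metis card_Un_le)
    also have "\<dots> \<le> m*L + L" using Suc card_block_le_if_not_subset[OF gaps] by (meson add_mono)
    finally show ?case by simp
  qed simp
  have "0 < 1 / (2 * real W)" by (simp add: W_def)
  then obtain N where N: "\<And>n. n \<ge> N \<Longrightarrow> \<bar>real (card (A \<inter> {..<n})) / real n - 1\<bar> < 1 / (2 * real W)"
    using assms unfolding density_one_def LIMSEQ_iff real_norm_def by blast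
  define n where "n = Suc N * W"
  have "real (card (A \<inter> {..<n})) \<le> real (Suc N * L)"
    using count[of "Suc N"] n_def by (simp only: of_nat_le_iff)
  then have "real (card (A \<inter> {..<n})) / real n \<le> real (Suc N * L) / real n"
    by (rule divide_right_mono) simp
  also have "\<dots> = real L / real W"
    unfolding n_def of_nat_mult by (rule mult_divide_mult_cancel_left) simp
  also have "\<dots> = 1 - 1 / real W" by (simp add: W_def field_simps)
  finally have "\<bar>real (card (A \<inter> {..<n})) / real n - 1\<bar> \<ge> 1 / real W" by simp
  moreover have "1 / (2 * real W) < 1 / real W" by (simp add: W_def field_simps)
  ultimately show False using N[of n] by (simp add: n_def W_def)
qed

lemma arbitrarily_large_monochromatic:
  assumes K: "finite K" "\<And>t. \<kappa> t \<in> K"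
    and large: "\<And>k. \<exists>S\<in>\<S>. k \<le> card S"
    and down: "\<forall>S\<in>\<S>. Pow S \<subseteq> \<S>"
  obtains v where "\<And>k. \<exists>S\<in>\<S>. k \<le> card S \<and> (\<forall>t\<in>S. \<kappa> t = v)"
proof -
  have "\<exists>v\<in>K. \<exists>S\<in>\<S>. n \<le> card {t\<in>S. \<kappa> t = v}" for n
  proof -
    obtain S where S: "S \<in> \<S>" "card K * n + 1 \<le> card S" using large by blast
    then have "finite S" "S \<noteq> {}" by (auto intro: card_ge_0_finite)
    then have "K \<noteq> {}" using K(2) by blast
    show ?thesis
    proof (rule ccontr)
      assume "\<not> ?thesis"
      then have small: "\<And>v. v \<in> K \<Longrightarrow> card {t\<in>S. \<kappa> t = v} < n"
        using S(1) by (meson not_le)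
      have "S = (\<Union>v\<in>K. {t\<in>S. \<kappa> t = v})" using K(2) by auto
      then have "card S \<le> (\<Sum>v\<in>K. card {t\<in>S. \<kappa> t = v})" by (metis card_UN_le K(1))
      also have "\<dots> < (\<Sum>v\<in>K. n)" using small \<open>K \<noteq> {}\<close> K(1) by (intro sum_strict_mono) auto
      finally show False using S(2) by simp
    qed
  qed
  then obtain V where V: "\<And>n. V n \<in> K" "\<And>n. \<exists>S\<in>\<S>. n \<le> card {t\<in>S. \<kappa> t = V n}" by metis
  have "finite (range V)" using K(1) V(1) by (metis finite_subset image_subsetI)
  then obtain n0 where "infinite {n. V n = V n0}"
    using pigeonhole_infinite[of "UNIV :: nat set" V] by auto
  then have "\<exists>S\<in>\<S>. k \<le> card S \<and> (\<forall>t\<in>S. \<kappa> t = V n0)" for k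
  proof -
    obtain n where n: "k \<le> n" "V n = V n0"
      using \<open>infinite {n. V n = V n0}\<close> unfolding infinite_nat_iff_unbounded_le by blast
    then obtain S where "S \<in> \<S>" "k \<le> card {t\<in>S. \<kappa> t = V n0}" using V(2)[of n] by fastforce
    moreover have "{t\<in>S. \<kappa> t = V n0} \<in> \<S>" using down \<open>S \<in> \<S>\<close> by auto
    ultimately show ?thesis by (intro bexI[of _ "{t\<in>S. \<kappa> t = V n0}"]) auto
  qed
  then show thesis using that by blast
qed

lemma Min_add_le_Max_if_card_ge:
  fixes S :: "nat set"
  assumes "Suc k \<le> card S"
  shows "Min S + k \<le> Max S" "Min S \<in> S" "Max S \<in> S"
proof -
  have S: "finite S" "S \<noteq> {}" using assms by (auto intro: card_ge_0_finite)
  then have "card S \<le> card {Min S..Max S}" by (intro card_mono) auto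
  then show "Min S + k \<le> Max S" using assms by simp
  show "Min S \<in> S" "Max S \<in> S" using S by auto
qed

lemma density_one_recurrent_blocks:
  assumes A: "density_one A" and K: "finite K" "\<And>t. \<kappa> t \<in> K"
  obtains l b s s' r where "0 < l" "{b..<b+l} \<subseteq> A" "\<kappa> (b + l) = \<kappa> b"
    and "\<And>n. 0 < s n" "\<And>n. s n + n < s' n" "\<And>n. {s n..<s' n} \<subseteq> A"
    and "\<And>n. s n mod l = r" "\<And>n. s' n mod l = r"
    and "\<And>n. \<kappa> (s n) = \<kappa> b" "\<And>n. \<kappa> (s' n) = \<kappa> b"
proof -
  \<comment> \<open>Sets of times inside a good block; closed under subsets, so it can be coloured twice.\<close>
  define \<S> where "\<S> = {S. \<exists>j L. 0 < j \<and> {j..j+L} \<subseteq> A \<and> S \<subseteq> {j..j+L}}"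
  have down: "\<forall>S\<in>\<S>. Pow S \<subseteq> \<S>" unfolding \<S>_def by (blast intro: order_trans)
  have span: "0 < Min S" "{Min S..Max S} \<subseteq> A" if S: "S \<in> \<S>" "Suc 0 \<le> card S" for S
  proof -
    obtain j L where "0 < j" "{j..j+L} \<subseteq> A" "S \<subseteq> {j..j+L}" using S(1) unfolding \<S>_def by blast
    moreover have "Min S \<in> S" "Max S \<in> S" using Min_add_le_Max_if_card_ge[OF S(2)] by auto
    ultimately show "0 < Min S" "{Min S..Max S} \<subseteq> A" by force+
  qed
  have large: "\<exists>S\<in>\<S>. k \<le> card S" for k
  proof -
    obtain j where "{j..j + Suc k} \<subseteq> A" using density_one_imp_thick[OF A] unfolding thick_def by blast
    then have "{Suc j..Suc j + k} \<in> \<S>"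
      unfolding \<S>_def by (intro CollectI exI[of _ "Suc j"] exI[of _ k]) auto
    then show ?thesis by (intro bexI) auto
  qed
  obtain c where c: "\<And>k. \<exists>S\<in>\<S>. k \<le> card S \<and> (\<forall>t\<in>S. \<kappa> t = c)"
    using arbitrarily_large_monochromatic[of K \<kappa> \<S>, OF K large down] by blast
  then obtain S1 where S1: "S1 \<in> \<S>" "Suc 1 \<le> card S1" "\<forall>t\<in>S1. \<kappa> t = c" by blast
  define b where "b = Min S1"
  define l where "l = Max S1 - Min S1"
  have l: "0 < l" "b + l = Max S1" using Min_add_le_Max_if_card_ge[OF S1(2)] by (auto simp: l_def b_def)
  have cyc: "{b..<b+l} \<subseteq> A" using span[OF S1(1)] S1(2) l(2) by (auto simp: b_def)
  have cb: "\<kappa> b = c" "\<kappa> (b + l) = c"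
    using S1(3) Min_add_le_Max_if_card_ge[OF S1(2)] l(2) by (auto simp: b_def)
  define \<S>c where "\<S>c = {S\<in>\<S>. \<forall>t\<in>S. \<kappa> t = c}"
  have large_c: "\<exists>S\<in>\<S>c. k \<le> card S" for k using c[of k] unfolding \<S>c_def by blast
  have down_c: "\<forall>S\<in>\<S>c. Pow S \<subseteq> \<S>c" unfolding \<S>c_def using down by blast
  obtain r where r: "\<And>k. \<exists>S\<in>\<S>c. k \<le> card S \<and> (\<forall>t\<in>S. t mod l = r)"
    using arbitrarily_large_monochromatic[of "{..<l}" "\<lambda>t. t mod l" "\<S>c", OF _ _ large_c down_c] l(1)
    by auto
  have "\<exists>s s'. 0 < s \<and> s + n < s' \<and> {s..<s'} \<subseteq> A \<and> s mod l = r \<and> s' mod l = r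
      \<and> \<kappa> s = \<kappa> b \<and> \<kappa> s' = \<kappa> b" for n
  proof -
    obtain S where S: "S \<in> \<S>" "Suc (Suc n) \<le> card S" "\<forall>t\<in>S. \<kappa> t = c \<and> t mod l = r"
      using r[of "Suc (Suc n)"] unfolding \<S>c_def by blast
    have "Suc 0 \<le> card S" using S(2) by simp
    note span = span[OF S(1) this] and ends = Min_add_le_Max_if_card_ge[OF S(2)]
    show ?thesis
    proof (intro exI conjI)
      show "0 < Min S" "Min S + n < Max S" "{Min S..<Max S} \<subseteq> A" using span ends by auto
      show "Min S mod l = r" "Max S mod l = r" "\<kappa> (Min S) = \<kappa> b" "\<kappa> (Max S) = \<kappa> b"
        using S(3) ends(2,3) cb by auto
    qed
  qed
  then obtain s s' where blocks: "\<And>n. 0 < s n \<and> s n + n < s' n \<and> {s n..<s' n} \<subseteq> A \<and> s n mod l = r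
      \<and> s' n mod l = r \<and> \<kappa> (s n) = \<kappa> b \<and> \<kappa> (s' n) = \<kappa> b" by metis
  show thesis by (rule that[where b=b and l=l and r=r and s=s and s'=s', OF l(1) cyc]) (simp_all add: blocks cb)
qed

section \<open>Pseudo-orbits and periodic shadowing\<close>

definition pseudo_orbit :: "'a::metric_space set \<Rightarrow> ('a \<Rightarrow> 'a) \<Rightarrow> real \<Rightarrow> (nat \<Rightarrow> 'a) \<Rightarrow> bool" where
  "pseudo_orbit X f \<delta> x \<longleftrightarrow> (\<forall>t. x t \<in> X) \<and> (\<forall>t. dist (f (x t)) (x (Suc t)) \<le> \<delta>)"

definition periodic_shadowing_at :: "'a::metric_space set \<Rightarrow> ('a \<Rightarrow> 'a) \<Rightarrow> real \<Rightarrow> real \<Rightarrow> bool" where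
  "periodic_shadowing_at X f \<epsilon> \<delta> \<longleftrightarrow> (\<forall>q p. 0 < p \<and> pseudo_orbit X f \<delta> q \<and> (\<forall>t. q (t + p) = q t) \<longrightarrow>
      (\<exists>z\<in>X. \<forall>t<p. dist (q t) ((f ^^ t) z) \<le> \<epsilon>))"

definition periodic_shadowing :: "'a::metric_space set \<Rightarrow> ('a \<Rightarrow> 'a) \<Rightarrow> bool" where
  "periodic_shadowing X f \<longleftrightarrow> (\<forall>\<epsilon>>0. \<exists>\<delta>>0. periodic_shadowing_at X f \<epsilon> \<delta>)"

lemma funpow_apply_funpow: "(f ^^ m) ((f ^^ n) x) = (f ^^ (n + m)) x"
  by (metis comp_apply funpow_add add.commute)

lemma periodic_add_mult: "(\<And>t. q (t + p) = q t) \<Longrightarrow> q (t + k * p) = q (t::nat)"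
  by (induction k arbitrary: t) (auto simp: add.assoc[symmetric])

lemma periodic_extension:
  fixes x :: "nat \<Rightarrow> 'a" and N R :: nat
  assumes "N < R"
  obtains Q where "\<And>t. Q (t + (R - N)) = Q t" and "\<And>t. N \<le> t \<Longrightarrow> t < R \<Longrightarrow> Q t = x t"
    and "\<And>t. \<exists>i. N \<le> i \<and> i < R \<and> Q t = x i \<and> Q (Suc t) = x (if Suc i = R then N else Suc i)"
proof
  define P where "P = R - N"
  have P: "0 < P" using assms by (simp add: P_def)
  define c where "c = N * (P - 1)" \<comment> \<open>\<open>c \<equiv> -N\<close> modulo \<open>P\<close>\<close>
  define Q where "Q t = x (N + (t + c) mod P)" for t
  show "Q (t + (R - N)) = Q t" for t
    unfolding Q_def P_def[symmetric] by (metis add.commute add.left_commute mod_add_self2)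
  show "Q t = x t" if "N \<le> t" "t < R" for t
  proof -
    have "t + c = (t - N) + N * P" using that P by (simp add: c_def algebra_simps)
    then have "(t + c) mod P = (t - N) mod P" by (metis mod_mult_self1)
    also have "\<dots> = t - N" using that by (simp add: P_def)
    finally have "(t + c) mod P = t - N" .
    then show ?thesis using that by (simp add: Q_def)
  qed
  show "\<exists>i. N \<le> i \<and> i < R \<and> Q t = x i \<and> Q (Suc t) = x (if Suc i = R then N else Suc i)" for t
  proof (intro exI conjI)
    define m where "m = (t + c) mod P"
    have "m < P" using P by (simp add: m_def)
    then show "N \<le> N + m" "N + m < R" using assms by (auto simp: P_def)
    show "Q t = x (N + m)" by (simp add: Q_def m_def)
    have "(Suc t + c) mod P = (if Suc m = P then 0 else Suc m)" by (simp add: m_def mod_Suc)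
    then show "Q (Suc t) = x (if Suc (N + m) = R then N else Suc (N + m))"
      using assms by (auto simp: Q_def P_def)
  qed
qed

lemma concatenation:
  fixes L :: "nat \<Rightarrow> nat" and q :: "nat \<Rightarrow> nat \<Rightarrow> 'a"
  assumes L: "\<And>k. 0 < L k"
  obtains T \<psi> where "strict_mono T" "\<And>k. T (Suc k) = T k + L k"
    and "\<And>k i. i < L k \<Longrightarrow> \<psi> (T k + i) = q k i" and "\<And>t. \<exists>k i. i < L k \<and> t = T k + i"
proof -
  define T where "T k = (\<Sum>i<k. L i)" for k
  have TS: "T (Suc k) = T k + L k" for k by (simp add: T_def)
  then have mono: "strict_mono T" using L by (simp add: strict_mono_Suc_iff)
  define blk where "blk t = (LEAST k. t < T (Suc k))" for t
  have blk_eq: "blk t = k" if "T k \<le> t" "t < T (Suc k)" for k t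
    unfolding blk_def
  proof (rule Least_equality[where P = "\<lambda>k. t < T (Suc k)", OF that(2)])
    show "k \<le> k'" if "t < T (Suc k')" for k'
      using \<open>T k \<le> t\<close> that strict_mono_less_eq[OF mono, of "Suc k'" k] by linarith
  qed
  define \<psi> where "\<psi> t = q (blk t) (t - T (blk t))" for t
  show thesis
  proof (rule that[OF mono TS])
    show "\<psi> (T k + i) = q k i" if "i < L k" for k i
      using blk_eq[of k "T k + i"] that by (simp add: \<psi>_def TS)
    show "\<exists>k i. i < L k \<and> t = T k + i" for t
    proof -
      have "t < T (Suc t)" using seq_suble[OF mono, of "Suc t"] by simp
      then have "t < T (Suc (blk t))" unfolding blk_def by (rule LeastI)
      moreover have "T (blk t) \<le> t"
      proof (cases "blk t")
        case (Suc k)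
        then have "\<not> t < T (Suc k)" using not_less_Least[of k "\<lambda>k. t < T (Suc k)"] by (simp add: blk_def)
        then show ?thesis using Suc by simp
      qed (simp add: T_def)
      ultimately show ?thesis using TS by (intro exI[of _ "blk t"] exI[of _ "t - T (blk t)"]) auto
    qed
  qed
qed

lemma tendsto_zero_if_blockwise_bounded:
  fixes g :: "nat \<Rightarrow> real"
  assumes T: "strict_mono T" "\<And>k. T (Suc k) = T k + L k" and cover: "\<And>t. \<exists>k i. i < L k \<and> t = T k + i"
    and bound: "\<And>k i. i < L k \<Longrightarrow> \<bar>g (T k + i)\<bar> \<le> \<eta> k" and \<eta>: "\<eta> \<longlonglongrightarrow> 0"
  shows "g \<longlonglongrightarrow> 0"
  unfolding tendsto_iff
proof (intro allI impI)
  fix \<epsilon> :: real assume "\<epsilon> > 0"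
  then obtain K where K: "\<And>k. K \<le> k \<Longrightarrow> \<eta> k < \<epsilon>"
    using \<eta> unfolding LIMSEQ_iff by (metis abs_less_iff diff_zero real_norm_def)
  show "\<forall>\<^sub>F t in sequentially. dist (g t) 0 < \<epsilon>"
  proof (rule eventually_sequentiallyI[of "T K"])
    fix t assume "T K \<le> t"
    obtain k i where ki: "i < L k" "t = T k + i" using cover by blast
    have "K \<le> k"
    proof (rule ccontr)
      assume "\<not> K \<le> k"
      then have "T (Suc k) \<le> T K" using strict_mono_less_eq[OF T(1)] by simp
      then show False using \<open>T K \<le> t\<close> ki T(2)[of k] by linarith
    qed
    then show "dist (g t) 0 < \<epsilon>" using bound[OF ki(1)] K ki(2) by fastforce
  qed
qed

lemma concatenation_asymptotic:
  fixes f :: "'a::metric_space \<Rightarrow> 'a"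
  assumes L: "\<And>k. 0 < L k" and T: "strict_mono T" "\<And>k. T (Suc k) = T k + L k"
    and \<psi>: "\<And>k i. i < L k \<Longrightarrow> \<psi> (T k + i) = q k i" and cover: "\<And>t. \<exists>k i. i < L k \<and> t = T k + i"
    and step: "\<And>k i. dist (f (q k i)) (q k (Suc i)) \<le> \<delta> k" and per: "\<And>k. q k (L k) = q k 0"
    and \<delta>: "\<delta> \<longlonglongrightarrow> 0" and start: "(\<lambda>k. q k 0) \<longlonglongrightarrow> a"
  shows "(\<lambda>t. dist (f (\<psi> t)) (\<psi> (Suc t))) \<longlonglongrightarrow> 0"
proof (rule tendsto_zero_if_blockwise_bounded[OF T cover])
  show "\<bar>dist (f (\<psi> (T k + i))) (\<psi> (Suc (T k + i)))\<bar> \<le> \<delta> k + dist (q k 0) (q (Suc k) 0)"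
    if "i < L k" for k i
  proof (cases "Suc i < L k")
    case True
    then have "\<psi> (Suc (T k + i)) = q k (Suc i)" using \<psi>[OF True] by simp
    then show ?thesis using \<psi>[OF that] step[of k i] by (simp add: add_increasing2)
  next
    case False
    then have "Suc i = L k" using that by simp
    then have "Suc (T k + i) = T (Suc k) + 0" "q k (Suc i) = q k 0" using T(2)[of k] per[of k] by simp_all
    then have "\<psi> (Suc (T k + i)) = q (Suc k) 0" "q k (Suc i) = q k 0" using \<psi>[OF L] by simp_all
    then show ?thesis
      using \<psi>[OF that] step[of k i] dist_triangle[of "f (q k i)" "q (Suc k) 0" "q k 0"] by simp
  qed
  show "(\<lambda>k. \<delta> k + dist (q k 0) (q (Suc k) 0)) \<longlonglongrightarrow> 0"
    using tendsto_add[OF \<delta> tendsto_dist[OF start LIMSEQ_Suc[OF start]]] by simp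
qed

definition in_blocks :: "nat \<Rightarrow> (nat \<Rightarrow> nat) \<Rightarrow> (nat \<Rightarrow> nat) \<Rightarrow> nat \<Rightarrow> bool" where
  "in_blocks h s s' u \<longleftrightarrow> (\<exists>n. s n + h \<le> u \<and> u < s' n + h)"

definition glue_blocks :: "(nat \<Rightarrow> 'a) \<Rightarrow> nat \<Rightarrow> nat \<Rightarrow> nat \<Rightarrow> (nat \<Rightarrow> nat) \<Rightarrow> (nat \<Rightarrow> nat) \<Rightarrow> nat \<Rightarrow> 'a"
  where "glue_blocks x b l h s s' u = (if in_blocks h s s' u then x (u - h) else x (b + u mod l))"

text \<open>Inside the shifted blocks \<open>[s n + h, s' n + h)\<close> the glued sequence follows \<open>x\<close>, elsewhere
  it runs through the cycle \<open>x b, \<dots>, x (b + l - 1)\<close>; since all block ends are multiples of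
  \<open>l\<close>, every transition is a jump from a good time to a point of the same colour.\<close>
context
  fixes f :: "'a::metric_space \<Rightarrow> 'a" and x :: "nat \<Rightarrow> 'a" and \<kappa> :: "nat \<Rightarrow> 'c" and A :: "nat set"
    and \<theta> :: real and b l h :: nat and s s' :: "nat \<Rightarrow> nat"
  assumes jump: "\<And>t c. t \<in> A \<Longrightarrow> \<kappa> (Suc t) = \<kappa> c \<Longrightarrow> dist (f (x t)) (x c) \<le> \<theta>"
    and cycle: "0 < l" "{b..<b+l} \<subseteq> A" "\<kappa> (b + l) = \<kappa> b"
    and blocks: "\<And>n. {s n..<s' n} \<subseteq> A" "\<And>n. \<kappa> (s n) = \<kappa> b" "\<And>n. \<kappa> (s' n) = \<kappa> b"
    and aligned: "\<And>n. (s n + h) mod l = 0" "\<And>n. (s' n + h) mod l = 0"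
begin

lemma glue_blocks_step_in_blocks:
  assumes "in_blocks h s s' u"
  shows "dist (f (glue_blocks x b l h s s' u)) (glue_blocks x b l h s s' (Suc u)) \<le> \<theta>"
proof -
  obtain n where n: "s n + h \<le> u" "u < s' n + h" using assms unfolding in_blocks_def by blast
  have "u - h \<in> {s n..<s' n}" using n by auto
  then have A: "u - h \<in> A" using blocks(1)[of n] by blast
  have u: "glue_blocks x b l h s s' u = x (u - h)" using assms by (simp add: glue_blocks_def)
  show ?thesis
  proof (cases "in_blocks h s s' (Suc u)")
    case True
    then have "glue_blocks x b l h s s' (Suc u) = x (Suc (u - h))"
      using n by (simp add: glue_blocks_def Suc_diff_le)
    then show ?thesis using jump[OF A refl] u by simp
  next
    case False
    then have "\<not> Suc u < s' n + h" using n(1) unfolding in_blocks_def by auto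
    then have "Suc u = s' n + h" using n(2) by simp
    moreover have "Suc (u - h) = s' n" using \<open>Suc u = s' n + h\<close> n(1) by simp
    ultimately have "glue_blocks x b l h s s' (Suc u) = x b" "\<kappa> (Suc (u - h)) = \<kappa> b"
      using False aligned(2)[of n] blocks(3)[of n] by (simp_all add: glue_blocks_def)
    then show ?thesis using jump[OF A] u by simp
  qed
qed

lemma glue_blocks_step_outside_blocks:
  assumes outside: "\<not> in_blocks h s s' u"
  shows "dist (f (glue_blocks x b l h s s' u)) (glue_blocks x b l h s s' (Suc u)) \<le> \<theta>"
proof -
  have last: "b + l - 1 \<in> A" "\<kappa> (Suc (b + l - 1)) = \<kappa> b" using cycle by auto
  show ?thesis
  proof (cases "in_blocks h s s' (Suc u)")
    case True
    then obtain m where m: "s m + h \<le> Suc u" "Suc u < s' m + h" unfolding in_blocks_def by blast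
    have "\<not> s m + h \<le> u" using outside m(2) unfolding in_blocks_def by (meson Suc_lessD)
    then have "Suc u = s m + h" using m(1) by simp
    then have "Suc u mod l = 0" using aligned(1)[of m] by simp
    then have "u mod l = l - 1" using cycle(1) by (metis mod_Suc diff_Suc_1 nat.distinct(1))
    then have "glue_blocks x b l h s s' u = x (b + l - 1)" using outside cycle(1) by (simp add: glue_blocks_def)
    moreover have "glue_blocks x b l h s s' (Suc u) = x (s m)"
      using True \<open>Suc u = s m + h\<close> by (simp add: glue_blocks_def)
    ultimately show ?thesis using jump[OF last(1), of "s m"] last(2) blocks(2)[of m] by simp
  next
    case False
    show ?thesis
    proof (cases "Suc (u mod l) = l")
      case True
      then have "b + u mod l = b + l - 1" by linarith
      then have "glue_blocks x b l h s s' u = x (b + l - 1)" "glue_blocks x b l h s s' (Suc u) = x b"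
        using True False outside by (simp_all add: glue_blocks_def mod_Suc)
      then show ?thesis using jump[OF last] by simp
    next
      case wrap: False
      then have "glue_blocks x b l h s s' (Suc u) = x (Suc (b + u mod l))"
        "glue_blocks x b l h s s' u = x (b + u mod l)"
        using False outside by (simp_all add: glue_blocks_def mod_Suc)
      moreover have "b + u mod l \<in> A" using cycle by auto
      ultimately show ?thesis using jump[of "b + u mod l" "Suc (b + u mod l)"] by simp
    qed
  qed
qed

lemma glue_blocks_step: "dist (f (glue_blocks x b l h s s' u)) (glue_blocks x b l h s s' (Suc u)) \<le> \<theta>"
  using glue_blocks_step_in_blocks glue_blocks_step_outside_blocks by blast

end

section \<open>Compact dynamical systems\<close>

locale compact_dynamical_system =
  fixes X :: "'a::metric_space set" and f :: "'a \<Rightarrow> 'a"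
  assumes compact: "compact X" and continuous: "continuous_on X f" and invariant: "f ` X \<subseteq> X"
begin

lemma funpow_in: "x \<in> X \<Longrightarrow> (f ^^ n) x \<in> X"
  by (induction n) (use invariant in auto)

lemma continuous_on_funpow: "continuous_on X (f ^^ n)"
proof (induction n)
  case (Suc n)
  have "continuous_on X (f \<circ> (f ^^ n))"
    by (rule continuous_on_compose[OF Suc]) (meson continuous_on_subset continuous funpow_in image_subsetI)
  then show ?case by (simp add: o_def)
qed (simp add: continuous_on_id)

lemma funpow_tendsto:
  "z \<longlonglongrightarrow> y \<Longrightarrow> y \<in> X \<Longrightarrow> (\<And>k. z k \<in> X) \<Longrightarrow> (\<lambda>k. (f ^^ n) (z k)) \<longlonglongrightarrow> (f ^^ n) y"
  by (rule continuous_on_tendsto_compose[OF continuous_on_funpow]) auto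

lemma dist_funpow_limit_le:
  assumes "z \<longlonglongrightarrow> y" "y \<in> X" "\<And>k. z k \<in> X"
    and "\<forall>\<^sub>F k in sequentially. dist a ((f ^^ n) (z k)) \<le> c"
  shows "dist a ((f ^^ n) y) \<le> c"
  using assms(4) by (intro tendsto_upperbound[OF tendsto_dist[OF tendsto_const funpow_tendsto[OF assms(1-3)]]]) auto

lemma convergent_subsequence:
  fixes z :: "nat \<Rightarrow> 'a"
  assumes "\<And>k. z k \<in> X"
  obtains r y where "strict_mono r" "y \<in> X" "(z \<circ> r) \<longlonglongrightarrow> y"
  using seq_compactE[OF compact_imp_seq_compact[OF compact], of z] assms that by blast

lemma nonwandering_subset: "nonwandering X f \<subseteq> X"
  unfolding nonwandering_def by auto

lemma omega_limit_nonwandering: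
  assumes z: "z \<in> X" and n: "strict_mono n" and lim: "(\<lambda>j. (f ^^ n j) z) \<longlonglongrightarrow> w" and "w \<in> X"
  shows "w \<in> nonwandering X f"
  unfolding nonwandering_def
proof (intro CollectI conjI allI impI \<open>w \<in> X\<close>)
  fix U assume U: "openin (top_of_set X) U \<and> w \<in> U"
  then obtain e where e: "e > 0" "\<And>x'. x' \<in> X \<Longrightarrow> dist x' w < e \<Longrightarrow> x' \<in> U"
    unfolding openin_euclidean_subtopology_iff by blast
  obtain J where J: "\<And>j. j \<ge> J \<Longrightarrow> dist ((f ^^ n j) z) w < e"
    using lim e(1) unfolding LIMSEQ_iff_nz by (metis dist_commute)
  have U_visits: "(f ^^ n j) z \<in> U" if "j \<ge> J" for j using J[OF that] e(2) funpow_in z by blast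
  define m where "m = n (Suc J) - n J"
  have "n J < n (Suc J)" using n strict_mono_def by blast
  then have "m \<ge> 1" "(f ^^ m) ((f ^^ n J) z) = (f ^^ n (Suc J)) z"
    unfolding m_def funpow_apply_funpow by simp_all
  moreover have "(f ^^ m) ((f ^^ n J) z) \<in> (f ^^ m) ` U" using U_visits[of J] by simp
  ultimately have "(f ^^ n (Suc J)) z \<in> (f ^^ m) ` U \<inter> U" using U_visits[of "Suc J"] by simp
  then show "\<exists>m\<ge>1. (f ^^ m) ` U \<inter> U \<noteq> {}" using \<open>m \<ge> 1\<close> by blast
qed

lemma closed_nonwandering: "closed (nonwandering X f)"
  unfolding closed_sequential_limits
proof (intro allI impI, elim conjE)
  fix w y assume w: "\<forall>k. w k \<in> nonwandering X f" and lim: "w \<longlonglongrightarrow> y"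
  have wX: "\<And>k. w k \<in> X" using w nonwandering_subset by blast
  have "y \<in> X" using compact_imp_closed[OF compact] wX lim closed_sequentially by blast
  then show "y \<in> nonwandering X f" unfolding nonwandering_def
  proof (intro CollectI conjI allI impI)
    fix U assume U: "openin (top_of_set X) U \<and> y \<in> U"
    then obtain e where e: "e > 0" "\<And>x'. x' \<in> X \<Longrightarrow> dist x' y < e \<Longrightarrow> x' \<in> U"
      unfolding openin_euclidean_subtopology_iff by blast
    obtain k where "dist (w k) y < e" using lim e(1) unfolding LIMSEQ_iff_nz by (metis order_refl)
    then have "w k \<in> U" using e wX by blast
    then show "\<exists>n\<ge>1. (f ^^ n) ` U \<inter> U \<noteq> {}" using w U unfolding nonwandering_def by blast
  qed
qed

lemma shadowing_point_limit:
  assumes S: "closed S" "S \<subseteq> X" and w: "\<And>n. w n \<in> S" and T: "\<And>n. n \<le> T n"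
    and shadow: "\<And>n t. N \<le> t \<Longrightarrow> t \<le> T n \<Longrightarrow> dist (x t) ((f ^^ t) (w n)) \<le> \<epsilon>"
  shows "\<exists>y\<in>S. \<forall>t\<ge>N. dist (x t) ((f ^^ t) y) \<le> \<epsilon>"
proof -
  obtain r y where r: "strict_mono r" "y \<in> X" "(w \<circ> r) \<longlonglongrightarrow> y"
    using convergent_subsequence[of w] w S(2) by blast
  have "y \<in> S" using r(3) w S(1) closed_sequentially[of S "w \<circ> r" y] by simp
  moreover have "dist (x t) ((f ^^ t) y) \<le> \<epsilon>" if "N \<le> t" for t
  proof (rule dist_funpow_limit_le[OF r(3) r(2)])
    show "(w \<circ> r) k \<in> X" for k using w S(2) by auto
    show "\<forall>\<^sub>F k in sequentially. dist (x t) ((f ^^ t) ((w \<circ> r) k)) \<le> \<epsilon>"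
      using eventually_ge_at_top[of t]
    proof eventually_elim
      case (elim k)
      then have "t \<le> T (r k)" using T[of "r k"] seq_suble[OF r(1), of k] by linarith
      then show ?case using shadow[OF that] by simp
    qed
  qed
  ultimately show ?thesis by blast
qed

lemma shadowing_of_returning_pseudo_orbit:
  assumes ps: "periodic_shadowing_at X f \<epsilon> \<delta>" and \<phi>: "pseudo_orbit X f \<delta> \<phi>"
    and returns: "\<And>n. \<exists>T\<ge>n. dist (f (\<phi> T)) (\<phi> 0) \<le> \<delta>"
  shows "\<exists>z\<in>X. \<forall>t. dist (\<phi> t) ((f ^^ t) z) \<le> \<epsilon>"
proof -
  obtain T where T: "\<And>n. n \<le> T n" "\<And>n. dist (f (\<phi> (T n))) (\<phi> 0) \<le> \<delta>" using returns by metis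
  have "\<exists>z\<in>X. \<forall>t\<le>T n. dist (\<phi> t) ((f ^^ t) z) \<le> \<epsilon>" for n
  proof -
    define q where "q t = \<phi> (t mod Suc (T n))" for t
    have "pseudo_orbit X f \<delta> q"
      using \<phi> T(2)[of n] unfolding pseudo_orbit_def q_def by (auto simp: mod_Suc)
    moreover have "\<forall>t. q (t + Suc (T n)) = q t" unfolding q_def by (metis mod_add_self2)
    ultimately obtain z where "z \<in> X" "\<forall>t<Suc (T n). dist (q t) ((f ^^ t) z) \<le> \<epsilon>"
      using ps[unfolded periodic_shadowing_at_def, rule_format, of "Suc (T n)" q] by blast
    then show ?thesis by (auto simp: q_def less_Suc_eq_le)
  qed
  then obtain z where "\<And>n. z n \<in> X" "\<And>n t. t \<le> T n \<Longrightarrow> dist (\<phi> t) ((f ^^ t) (z n)) \<le> \<epsilon>"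
    by metis
  then show ?thesis using shadowing_point_limit[of X z T 0 \<phi> \<epsilon>] compact_imp_closed[OF compact] T(1) by blast
qed

lemma periodic_pseudo_orbit_shadowed_by_nonwandering:
  assumes ps: "periodic_shadowing_at X f \<epsilon> \<delta>" and p: "0 < p" and q: "pseudo_orbit X f \<delta> q"
    and per: "\<And>t. q (t + p) = q t"
  shows "\<exists>w\<in>nonwandering X f. \<forall>t. dist (q t) ((f ^^ t) w) \<le> \<epsilon>"
proof -
  have "\<exists>T\<ge>n. dist (f (q T)) (q 0) \<le> \<delta>" for n
  proof (intro exI conjI)
    have "Suc (n * p + (p - 1)) = 0 + Suc n * p" using p by simp
    then show "dist (f (q (n * p + (p - 1)))) (q 0) \<le> \<delta>"
      using q periodic_add_mult[of q p, OF per, of 0 "Suc n"] unfolding pseudo_orbit_def by metis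
    show "n \<le> n * p + (p - 1)" using p by (metis le_add1 le_trans mult_le_mono2 mult.right_neutral Suc_leI One_nat_def)
  qed
  then obtain z where z: "z \<in> X" "\<And>t. dist (q t) ((f ^^ t) z) \<le> \<epsilon>"
    using shadowing_of_returning_pseudo_orbit[OF ps q] by blast
  define y where "y j = (f ^^ (j * p)) z" for j
  have yX: "\<And>j. y j \<in> X" using funpow_in z(1) by (simp add: y_def)
  obtain r w where r: "strict_mono r" "w \<in> X" "(y \<circ> r) \<longlonglongrightarrow> w" using convergent_subsequence yX by metis
  have "dist (q t) ((f ^^ t) w) \<le> \<epsilon>" for t
  proof (rule dist_funpow_limit_le[OF r(3) r(2)])
    show "(y \<circ> r) k \<in> X" for k using yX by simp
    have "dist (q t) ((f ^^ t) ((y \<circ> r) k)) \<le> \<epsilon>" for k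
      using z(2)[of "t + r k * p"] periodic_add_mult[of q p, OF per, of t "r k"]
      by (simp add: y_def funpow_apply_funpow add.commute)
    then show "\<forall>\<^sub>F k in sequentially. dist (q t) ((f ^^ t) ((y \<circ> r) k)) \<le> \<epsilon>" by simp
  qed
  moreover have "w \<in> nonwandering X f"
  proof (rule omega_limit_nonwandering[OF z(1) _ _ r(2)])
    show "strict_mono (\<lambda>j. r j * p)" using r(1) p unfolding strict_mono_def by simp
    show "(\<lambda>j. (f ^^ (r j * p)) z) \<longlonglongrightarrow> w" using r(3) by (simp add: y_def o_def)
  qed
  ultimately show ?thesis by blast
qed

lemma closed_segment_shadowed_by_nonwandering:
  assumes ps: "periodic_shadowing_at X f \<epsilon> \<delta>" and x: "\<And>t. x t \<in> X" and "N < R"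
    and steps: "\<And>t. N \<le> t \<Longrightarrow> Suc t < R \<Longrightarrow> dist (f (x t)) (x (Suc t)) \<le> \<delta>"
    and closing: "dist (f (x (R - 1))) (x N) \<le> \<delta>"
  shows "\<exists>w\<in>nonwandering X f. \<forall>t. N \<le> t \<and> t < R \<longrightarrow> dist (x t) ((f ^^ t) w) \<le> \<epsilon>"
proof -
  obtain Q where per: "\<And>t. Q (t + (R - N)) = Q t" and Q: "\<And>t. N \<le> t \<Longrightarrow> t < R \<Longrightarrow> Q t = x t"
    and step: "\<And>t. \<exists>i. N \<le> i \<and> i < R \<and> Q t = x i \<and> Q (Suc t) = x (if Suc i = R then N else Suc i)"
    using periodic_extension[of N R x] \<open>N < R\<close> by metis
  have "dist (f (Q t)) (Q (Suc t)) \<le> \<delta>" for t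
  proof -
    obtain i where i: "N \<le> i" "i < R" "Q t = x i" "Q (Suc t) = x (if Suc i = R then N else Suc i)"
      using step by blast
    show ?thesis
    proof (cases "Suc i = R")
      case True
      then have "i = R - 1" by simp
      then show ?thesis using i closing True by simp
    qed (use i steps in simp)
  qed
  moreover have "Q t \<in> X" for t using step[of t] x by metis
  ultimately have "pseudo_orbit X f \<delta> Q" unfolding pseudo_orbit_def by blast
  moreover have "0 < R - N" using \<open>N < R\<close> by simp
  ultimately obtain w where "w \<in> nonwandering X f" "\<forall>t. dist (Q t) ((f ^^ t) w) \<le> \<epsilon>"
    using periodic_pseudo_orbit_shadowed_by_nonwandering[of \<epsilon> \<delta> "R - N" Q, OF ps _ _ per] by blast
  then show ?thesis using Q by metis
qed

text \<open>The tail segments \<open>[N, R)\<close> start and end at times where \<open>x\<close> is close to the same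
  accumulation point, so they close up into periodic pseudo-orbits.\<close>
lemma eventually_shadowed_by_nonwandering:
  assumes ps: "periodic_shadowing X f" and x: "\<And>t. x t \<in> X"
    and asy: "(\<lambda>t. dist (f (x t)) (x (Suc t))) \<longlonglongrightarrow> 0" and "\<epsilon> > 0"
  shows "\<exists>N. \<exists>w\<in>nonwandering X f. \<forall>t\<ge>N. dist (x t) ((f ^^ t) w) \<le> \<epsilon>"
proof -
  obtain \<delta> where \<delta>: "\<delta> > 0" "periodic_shadowing_at X f \<epsilon> \<delta>"
    using ps \<open>\<epsilon> > 0\<close> unfolding periodic_shadowing_def by blast
  obtain r a where r: "strict_mono r" "a \<in> X" "(x \<circ> r) \<longlonglongrightarrow> a" using convergent_subsequence x by metis
  obtain N1 where N1: "\<And>t. N1 \<le> t \<Longrightarrow> dist (f (x t)) (x (Suc t)) < \<delta>/2"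
    using asy \<delta>(1) unfolding LIMSEQ_iff by (metis half_gt_zero diff_zero abs_of_nonneg zero_le_dist real_norm_def)
  obtain N2 where N2: "\<And>k. N2 \<le> k \<Longrightarrow> dist (x (r k)) a < \<delta>/4"
    using r(3) \<delta>(1) unfolding LIMSEQ_iff_nz by (metis o_apply zero_less_divide_iff zero_less_numeral)
  define K where "K = max N1 N2"
  define N where "N = r K"
  have "N1 \<le> N" using seq_suble[OF r(1), of K] by (simp add: N_def K_def)
  have "\<exists>w\<in>nonwandering X f. \<forall>t. N \<le> t \<and> t < r (Suc K + j) \<longrightarrow> dist (x t) ((f ^^ t) w) \<le> \<epsilon>" for j
  proof (rule closed_segment_shadowed_by_nonwandering[OF \<delta>(2) x])
    define R where "R = r (Suc K + j)"
    show "N < R" unfolding N_def R_def using r(1) by (simp add: strict_mono_less)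
    show "dist (f (x t)) (x (Suc t)) \<le> \<delta>" if "N \<le> t" for t
      using N1[OF le_trans[OF \<open>N1 \<le> N\<close> that]] \<delta>(1) by simp
    have "dist (x R) a < \<delta>/4" "dist (x N) a < \<delta>/4" using N2 by (simp_all add: R_def N_def K_def)
    then have "dist (x R) (x N) < \<delta>/2" using dist_triangle2[of "x R" "x N" a] by linarith
    moreover have "dist (f (x (R - 1))) (x R) < \<delta>/2" using N1[of "R - 1"] \<open>N1 \<le> N\<close> \<open>N < R\<close> by simp
    ultimately show "dist (f (x (R - 1))) (x N) \<le> \<delta>"
      using dist_triangle[of "f (x (R - 1))" "x N" "x R"] by linarith
  qed
  then obtain W where W: "\<And>j. W j \<in> nonwandering X f"
    "\<And>j t. N \<le> t \<Longrightarrow> t < r (Suc K + j) \<Longrightarrow> dist (x t) ((f ^^ t) (W j)) \<le> \<epsilon>"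
    by metis
  show ?thesis
  proof (intro exI[of _ N] shadowing_point_limit[OF closed_nonwandering nonwandering_subset W(1)])
    show "j \<le> r (Suc K + j) - 1" for j using seq_suble[OF r(1), of "Suc K + j"] by linarith
    show "dist (x t) ((f ^^ t) (W j)) \<le> \<epsilon>" if "N \<le> t" "t \<le> r (Suc K + j) - 1" for j t
      using that seq_suble[OF r(1), of "Suc K + j"] by (intro W(2)) linarith+
  qed
qed

lemma compact_full_sequences: "compact (PiE UNIV (\<lambda>_::int. X))"
  using compactin_PiE[of "\<lambda>_. euclidean" UNIV "\<lambda>_. X"] compact by (simp add: euclidean_product_topology)

lemma limit_full_orbit:
  assumes p: "\<And>k. p k \<in> X" and n: "\<And>k. k \<le> n k"
  obtains \<sigma> a where "strict_mono \<sigma>" "a \<in> full_orbits X f"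
    "\<And>i. (\<lambda>k. (f ^^ nat (int (n (\<sigma> k)) + i)) (p (\<sigma> k))) \<longlonglongrightarrow> a i"
proof -
  define g where "g k = (\<lambda>i::int. (f ^^ nat (int (n k) + i)) (p k))" for k
  have gX: "g k i \<in> X" for k i using funpow_in p by (simp add: g_def)
  then have "g k \<in> PiE UNIV (\<lambda>_. X)" for k by auto
  then obtain a \<sigma> where a: "a \<in> PiE UNIV (\<lambda>_. X)" "strict_mono \<sigma>" "(g \<circ> \<sigma>) \<longlonglongrightarrow> a"
    using seq_compactE[OF compact_imp_seq_compact[OF compact_full_sequences], of g] by blast
  have lim: "(\<lambda>k. g (\<sigma> k) i) \<longlonglongrightarrow> a i" for i
    using continuous_on_tendsto_compose[OF continuous_on_product_coordinates a(3)] by (simp add: o_def)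
  have aX: "a i \<in> X" for i using a(1) by auto
  have "f (a i) = a (i + 1)" for i
  proof -
    have "(\<lambda>k. f (g (\<sigma> k) i)) \<longlonglongrightarrow> f (a i)"
      by (rule continuous_on_tendsto_compose[OF continuous lim aX]) (simp add: gX)
    moreover have "\<forall>\<^sub>F k in sequentially. f (g (\<sigma> k) i) = g (\<sigma> k) (i + 1)"
    proof (rule eventually_sequentiallyI[of "nat (- i)"])
      fix k assume "nat (- i) \<le> k"
      then have "nat (int (n (\<sigma> k)) + (i + 1)) = Suc (nat (int (n (\<sigma> k)) + i))"
        using n[of "\<sigma> k"] seq_suble[OF a(2), of k] by linarith
      then show "f (g (\<sigma> k) i) = g (\<sigma> k) (i + 1)" by (simp add: g_def)
    qed
    ultimately have "(\<lambda>k. g (\<sigma> k) (i + 1)) \<longlonglongrightarrow> f (a i)" by (rule Lim_transform_eventually)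
    then show ?thesis using lim[of "i + 1"] LIMSEQ_unique by blast
  qed
  then have "a \<in> full_orbits X f" using aX unfolding full_orbits_def by blast
  with a(2) lim show thesis by (intro that) (simp_all add: g_def)
qed

lemma asymptotic_if_c_expansive:
  assumes e: "\<forall>x\<in>full_orbits X f. \<forall>y\<in>full_orbits X f. (\<forall>i. dist (x i) (y i) \<le> e) \<longrightarrow> x = y"
    and u: "u \<in> X" and v: "v \<in> X" and close: "\<And>t. dist ((f ^^ t) u) ((f ^^ t) v) \<le> e"
  shows "(\<lambda>t. dist ((f ^^ t) u) ((f ^^ t) v)) \<longlonglongrightarrow> 0"
proof (rule ccontr)
  assume "\<not> ?thesis"
  then obtain \<eta> where \<eta>: "\<eta> > 0" "\<forall>N. \<exists>t\<ge>N. \<eta> \<le> dist ((f ^^ t) u) ((f ^^ t) v)"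
    unfolding LIMSEQ_iff by (auto simp: not_less)
  then obtain n where n: "\<And>k. k \<le> n k" "\<And>k. \<eta> \<le> dist ((f ^^ n k) u) ((f ^^ n k) v)" by metis
  obtain \<sigma> a where \<sigma>: "strict_mono \<sigma>" "a \<in> full_orbits X f"
    "\<And>i. (\<lambda>k. (f ^^ nat (int (n (\<sigma> k)) + i)) u) \<longlonglongrightarrow> a i"
    by (rule limit_full_orbit[of "\<lambda>_. u" n]) (use u n(1) in auto)
  have n\<sigma>: "k \<le> n (\<sigma> k)" for k using n(1)[of "\<sigma> k"] seq_suble[OF \<sigma>(1), of k] by linarith
  obtain \<tau> b where \<tau>: "strict_mono \<tau>" "b \<in> full_orbits X f"
    "\<And>i. (\<lambda>k. (f ^^ nat (int (n (\<sigma> (\<tau> k))) + i)) v) \<longlonglongrightarrow> b i"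
    by (rule limit_full_orbit[of "\<lambda>_. v" "\<lambda>k. n (\<sigma> k)"]) (use v n\<sigma> in auto)
  have a: "(\<lambda>k. (f ^^ nat (int (n (\<sigma> (\<tau> k))) + i)) u) \<longlonglongrightarrow> a i" for i
    using LIMSEQ_subseq_LIMSEQ[OF \<sigma>(3) \<tau>(1)] by (simp add: o_def)
  have "dist (a i) (b i) \<le> e" for i
    using close by (intro tendsto_upperbound[OF tendsto_dist[OF a \<tau>(3)]]) simp_all
  then have "a = b" using e \<sigma>(2) \<tau>(2) by blast
  moreover have "\<eta> \<le> dist (a 0) (b 0)"
    using n(2) by (intro tendsto_lowerbound[OF tendsto_dist[OF a \<tau>(3)]]) simp_all
  ultimately show False using \<eta>(1) by simp
qed

lemma asymptotically_shadowed_if_c_expansive: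
  assumes "c_expansive X f"
    and ev: "\<And>\<epsilon>. \<epsilon> > 0 \<Longrightarrow> \<exists>N. \<exists>w\<in>nonwandering X f. \<forall>t\<ge>N. dist (x t) ((f ^^ t) w) \<le> \<epsilon>"
  shows "\<exists>y\<in>nonwandering X f. (\<lambda>t. dist (x t) ((f ^^ t) y)) \<longlonglongrightarrow> 0"
proof -
  obtain e where "e > 0" and e: "\<forall>x\<in>full_orbits X f. \<forall>y\<in>full_orbits X f. (\<forall>i. dist (x i) (y i) \<le> e) \<longrightarrow> x = y"
    using assms(1) unfolding c_expansive_def by blast
  obtain N0 y where y: "y \<in> nonwandering X f" "\<And>t. N0 \<le> t \<Longrightarrow> dist (x t) ((f ^^ t) y) \<le> e/2"
    using ev[of "e/2"] \<open>e > 0\<close> by auto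
  have "\<forall>\<^sub>F t in sequentially. dist (x t) ((f ^^ t) y) < \<tau>" if "\<tau> > 0" for \<tau>
  proof -
    define \<epsilon> where "\<epsilon> = min \<tau> e / 2"
    have \<epsilon>: "\<epsilon> > 0" "\<epsilon> \<le> e/2" "2 * \<epsilon> \<le> \<tau>" using \<open>\<tau> > 0\<close> \<open>e > 0\<close> by (auto simp: \<epsilon>_def)
    obtain N1 w where w: "w \<in> nonwandering X f" "\<And>t. N1 \<le> t \<Longrightarrow> dist (x t) ((f ^^ t) w) \<le> \<epsilon>"
      using ev[OF \<epsilon>(1)] by auto
    define M where "M = max N0 N1"
    have orbits_close: "dist ((f ^^ s) ((f ^^ M) w)) ((f ^^ s) ((f ^^ M) y)) \<le> e" for s
    proof -
      have "N0 \<le> M + s" "N1 \<le> M + s" by (auto simp: M_def)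
      then show ?thesis
        using w(2) y(2) \<epsilon>(2) dist_triangle3[of "(f ^^ (M + s)) w" "(f ^^ (M + s)) y" "x (M + s)"]
        by (fastforce simp: funpow_apply_funpow)
    qed
    have "(\<lambda>s. dist ((f ^^ s) ((f ^^ M) w)) ((f ^^ s) ((f ^^ M) y))) \<longlonglongrightarrow> 0"
      using w(1) y(1) nonwandering_subset funpow_in
      by (intro asymptotic_if_c_expansive[OF e _ _ orbits_close]) auto
    then have "\<forall>\<^sub>F s in sequentially. dist ((f ^^ (M + s)) w) ((f ^^ (M + s)) y) < \<epsilon>"
      using \<epsilon>(1) unfolding tendsto_iff by (simp add: funpow_apply_funpow)
    then have "\<forall>\<^sub>F t in sequentially. dist ((f ^^ t) w) ((f ^^ t) y) < \<epsilon>"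
      by (rule eventually_sequentially_seg[THEN iffD1, of _ M, unfolded add.commute[of _ M]])
    then show ?thesis using eventually_ge_at_top[of N1]
    proof eventually_elim
      case (elim t)
      then show ?case using w(2)[of t] \<epsilon>(3) dist_triangle[of "x t" "(f ^^ t) y" "(f ^^ t) w"] by linarith
    qed
  qed
  then have "(\<lambda>t. dist (x t) ((f ^^ t) y)) \<longlonglongrightarrow> 0" unfolding tendsto_iff by simp
  then show ?thesis using y(1) by blast
qed

lemma asymptotically_shadowed_if_equicontinuous:
  assumes eq: "equicontinuous X f"
    and ev: "\<And>\<epsilon>. \<epsilon> > 0 \<Longrightarrow> \<exists>N. \<exists>w\<in>nonwandering X f. \<forall>t\<ge>N. dist (x t) ((f ^^ t) w) \<le> \<epsilon>"
  shows "\<exists>y\<in>nonwandering X f. (\<lambda>t. dist (x t) ((f ^^ t) y)) \<longlonglongrightarrow> 0"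
proof -
  have "\<exists>N. \<exists>w\<in>nonwandering X f. \<forall>t\<ge>N. dist (x t) ((f ^^ t) w) \<le> 1 / Suc k" for k
    using ev by simp
  then obtain N W where W: "\<And>k. W k \<in> nonwandering X f"
    "\<And>k t. N k \<le> t \<Longrightarrow> dist (x t) ((f ^^ t) (W k)) \<le> 1 / Suc k"
    by metis
  have WX: "\<And>k. W k \<in> X" using W(1) nonwandering_subset by blast
  obtain r y where r: "strict_mono r" "y \<in> X" "(W \<circ> r) \<longlonglongrightarrow> y" using convergent_subsequence WX by metis
  have "y \<in> nonwandering X f"
    using closed_nonwandering W(1) r(3) closed_sequentially[of _ "W \<circ> r"] by simp
  moreover have "\<forall>\<^sub>F t in sequentially. dist (x t) ((f ^^ t) y) < \<tau>" if "\<tau> > 0" for \<tau>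
  proof -
    obtain \<delta> where \<delta>: "\<delta> > 0" "\<And>u v n. u \<in> X \<Longrightarrow> v \<in> X \<Longrightarrow> dist u v \<le> \<delta> \<Longrightarrow> dist ((f ^^ n) u) ((f ^^ n) v) \<le> \<tau>/2"
      using eq \<open>\<tau> > 0\<close> unfolding equicontinuous_def by (meson half_gt_zero)
    obtain K1 where K1: "\<And>k. K1 \<le> k \<Longrightarrow> dist (W (r k)) y < \<delta>"
      using r(3) \<delta>(1) unfolding LIMSEQ_iff_nz by (metis o_apply)
    obtain K2 where K2: "1 / Suc K2 < \<tau>/2" using \<open>\<tau> > 0\<close> by (metis half_gt_zero nat_approx_posE)
    define k where "k = r (max K1 K2)"
    have near: "dist (W k) y < \<delta>" using K1 by (simp add: k_def)
    have "1 / Suc k \<le> 1 / Suc K2"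
      using seq_suble[OF r(1), of "max K1 K2"] by (simp add: k_def divide_left_mono)
    then have small: "1 / Suc k < \<tau>/2" using K2 by linarith
    show ?thesis using eventually_ge_at_top[of "N k"]
    proof eventually_elim
      case (elim t)
      have "dist ((f ^^ t) (W k)) ((f ^^ t) y) \<le> \<tau>/2" using \<delta>(2) WX r(2) near by simp
      then show ?case
        using W(2)[OF elim] small dist_triangle[of "x t" "(f ^^ t) y" "(f ^^ t) (W k)"] by linarith
    qed
  qed
  then have "(\<lambda>t. dist (x t) ((f ^^ t) y)) \<longlonglongrightarrow> 0" unfolding tendsto_iff by simp
  ultimately show ?thesis by blast
qed

lemma periodic_shadowing_if_limit_shadowing:
  assumes ls: "limit_shadowing X f"
  shows "periodic_shadowing X f"
  unfolding periodic_shadowing_def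
proof (intro allI impI)
  fix \<epsilon> :: real assume "\<epsilon> > 0"
  show "\<exists>\<delta>>0. periodic_shadowing_at X f \<epsilon> \<delta>"
  proof (rule ccontr)
    assume "\<not> ?thesis"
    then have "\<not> periodic_shadowing_at X f \<epsilon> (1 / Suc m)" for m by simp
    then have "\<exists>q p. 0 < p \<and> pseudo_orbit X f (1 / Suc m) q \<and> (\<forall>t. q (t + p) = q t)
        \<and> (\<forall>z\<in>X. \<exists>t<p. \<epsilon> < dist (q t) ((f ^^ t) z))" for m
      unfolding periodic_shadowing_at_def by (auto simp: not_le)
    then obtain q p where p: "\<And>m. 0 < p m" and q: "\<And>m. pseudo_orbit X f (1 / Suc m) (q m)"
      and per: "\<And>m t. q m (t + p m) = q m t"
      and bad: "\<And>m z. z \<in> X \<Longrightarrow> \<exists>t<p m. \<epsilon> < dist (q m t) ((f ^^ t) z)"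
      by metis
    have qX: "q m t \<in> X" for m t using q unfolding pseudo_orbit_def by blast
    obtain \<sigma> a where \<sigma>: "strict_mono \<sigma>" "a \<in> X" "((\<lambda>m. q m 0) \<circ> \<sigma>) \<longlonglongrightarrow> a"
      using convergent_subsequence[of "\<lambda>m. q m 0"] qX by blast
    obtain T \<psi> where T: "strict_mono T" "\<And>k. T (Suc k) = T k + p (\<sigma> k)"
      and \<psi>: "\<And>k i. i < p (\<sigma> k) \<Longrightarrow> \<psi> (T k + i) = q (\<sigma> k) i"
      and cover: "\<And>t. \<exists>k i. i < p (\<sigma> k) \<and> t = T k + i"
      by (rule concatenation[of "\<lambda>k. p (\<sigma> k)" "\<lambda>k. q (\<sigma> k)"]) (use p in auto)
    have \<psi>X: "\<psi> t \<in> X" for t using cover[of t] \<psi> qX by metis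
    have \<delta>: "(\<lambda>k. 1 / Suc (\<sigma> k)) \<longlonglongrightarrow> (0::real)"
      using LIMSEQ_subseq_LIMSEQ[OF LIMSEQ_Suc[OF lim_inverse_n'] \<sigma>(1)] by (simp add: o_def)
    have "(\<lambda>t. dist (f (\<psi> t)) (\<psi> (Suc t))) \<longlonglongrightarrow> 0"
    proof (rule concatenation_asymptotic[OF _ T \<psi> cover _ _ \<delta> \<sigma>(3)[unfolded o_def]])
      show "0 < p (\<sigma> k)" for k using p by blast
      show "dist (f (q (\<sigma> k) i)) (q (\<sigma> k) (Suc i)) \<le> 1 / Suc (\<sigma> k)" for k i
        using q unfolding pseudo_orbit_def by blast
      show "q (\<sigma> k) (p (\<sigma> k)) = q (\<sigma> k) 0" for k using per[of _ 0] by simp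
    qed
    then obtain y where "y \<in> X" and y: "(\<lambda>t. dist (\<psi> t) ((f ^^ t) y)) \<longlonglongrightarrow> 0"
      using ls \<psi>X unfolding limit_shadowing_def by blast
    then obtain K where K: "\<And>t. K \<le> t \<Longrightarrow> dist (\<psi> t) ((f ^^ t) y) < \<epsilon>"
      using \<open>\<epsilon> > 0\<close> unfolding LIMSEQ_iff by (metis abs_of_nonneg zero_le_dist real_norm_def diff_zero)
    obtain i where i: "i < p (\<sigma> K)" "\<epsilon> < dist (q (\<sigma> K) i) ((f ^^ i) ((f ^^ T K) y))"
      using bad funpow_in \<open>y \<in> X\<close> by blast
    have "K \<le> T K + i" using seq_suble[OF T(1), of K] by simp
    then show False using K[of "T K + i"] i \<psi> by (simp add: funpow_apply_funpow)
  qed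
qed

text \<open>A thick-shadowing block of length two periods contains a full period starting at a
  multiple of the period.\<close>
lemma periodic_shadowing_if_thick_shadowing:
  assumes th: "thick_shadowing X f"
  shows "periodic_shadowing X f"
  unfolding periodic_shadowing_def
proof (intro allI impI)
  fix \<epsilon> :: real assume "\<epsilon> > 0"
  then obtain \<delta> where "\<delta> > 0" and \<delta>: "\<And>x. (\<forall>i. x i \<in> X) \<and> density_one {i. dist (f (x i)) (x (Suc i)) \<le> \<delta>} \<Longrightarrow>
      \<exists>z\<in>X. thick {i. dist (x i) ((f ^^ i) z) \<le> \<epsilon>}"
    using th unfolding thick_shadowing_def by meson
  have "periodic_shadowing_at X f \<epsilon> \<delta>" unfolding periodic_shadowing_at_def
  proof (intro allI impI, elim conjE)
    fix q :: "nat \<Rightarrow> 'a" and p :: nat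
    assume "0 < p" and q: "pseudo_orbit X f \<delta> q" and per: "\<forall>t. q (t + p) = q t"
    then have "{i. dist (f (q i)) (q (Suc i)) \<le> \<delta>} = UNIV" unfolding pseudo_orbit_def by auto
    then obtain z where z: "z \<in> X" "thick {i. dist (q i) ((f ^^ i) z) \<le> \<epsilon>}"
      using \<delta>[of q] q density_one_UNIV unfolding pseudo_orbit_def by auto
    then obtain j where j: "{j..j + 2 * p} \<subseteq> {i. dist (q i) ((f ^^ i) z) \<le> \<epsilon>}"
      unfolding thick_def by blast
    define m where "m = Suc (j div p) * p"
    have "m = j div p * p + p" "j = j div p * p + j mod p" "j mod p < p"
      using \<open>0 < p\<close> by (simp_all add: m_def)
    then have "j < m" "m \<le> j + p" by linarith+
    show "\<exists>z\<in>X. \<forall>t<p. dist (q t) ((f ^^ t) z) \<le> \<epsilon>"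
    proof (intro bexI allI impI)
      show "(f ^^ m) z \<in> X" using funpow_in z(1) by blast
      fix t assume "t < p"
      then have "m + t \<in> {j..j + 2 * p}" using \<open>j < m\<close> \<open>m \<le> j + p\<close> by simp
      then have "dist (q (m + t)) ((f ^^ (m + t)) z) \<le> \<epsilon>" using j by blast
      moreover have "q (m + t) = q t"
        using periodic_add_mult[of q p t "Suc (j div p)"] per by (simp add: m_def add.commute)
      ultimately show "dist (q t) ((f ^^ t) ((f ^^ m) z)) \<le> \<epsilon>" by (simp add: funpow_apply_funpow)
    qed
  qed
  then show "\<exists>\<delta>>0. periodic_shadowing_at X f \<epsilon> \<delta>" using \<open>\<delta> > 0\<close> by blast
qed

text \<open>The blocks \<open>[s n, s' n)\<close> of \<open>x\<close>, kept at their own times, are glued together by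
  copies of the cycle; the common residue of the block ends modulo \<open>l\<close> makes every gap a whole
  number of cycles, and the glued pseudo-orbit returns to its start at the end of every block.\<close>
lemma shadowing_of_recurrent_blocks:
  assumes ps: "periodic_shadowing_at X f \<epsilon> \<theta>" and x: "\<And>t. x t \<in> X"
    and jump: "\<And>t c. t \<in> A \<Longrightarrow> \<kappa> (Suc t) = \<kappa> c \<Longrightarrow> dist (f (x t)) (x c) \<le> \<theta>"
    and cycle: "0 < l" "{b..<b+l} \<subseteq> A" "\<kappa> (b + l) = \<kappa> b"
    and blocks: "\<And>n. 0 < s n" "\<And>n. s n + n < s' n" "\<And>n. {s n..<s' n} \<subseteq> A"
      "\<And>n. s n mod l = r" "\<And>n. s' n mod l = r" "\<And>n. \<kappa> (s n) = \<kappa> b" "\<And>n. \<kappa> (s' n) = \<kappa> b"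
  shows "\<exists>z\<in>X. \<forall>n. \<forall>t\<in>{s n..<s' n}. dist (x t) ((f ^^ t) z) \<le> \<epsilon>"
proof -
  define h where "h = (l - r) mod l"
  have aligned: "(s n + h) mod l = 0" "(s' n + h) mod l = 0" for n
    using blocks(4,5)[of n] cycle(1) unfolding h_def by (metis mod_add_eq mod_add_left_eq le_add_diff_inverse mod_le_divisor mod_self less_imp_le mod_less_divisor)+
  define \<phi> where "\<phi> = glue_blocks x b l h s s'"
  note \<phi>_eq = glue_blocks_def[of x b l h s s', folded \<phi>_def]
  have "dist (f (\<phi> u)) (\<phi> (Suc u)) \<le> \<theta>" for u
    unfolding \<phi>_def
    by (rule glue_blocks_step[where A = A and \<kappa> = \<kappa>]) (use jump cycle blocks aligned in auto)
  then have "pseudo_orbit X f \<theta> \<phi>" unfolding pseudo_orbit_def using x by (simp add: \<phi>_eq)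
  moreover have "\<exists>T\<ge>n. dist (f (\<phi> T)) (\<phi> 0) \<le> \<theta>" for n
  proof (intro exI conjI)
    have "\<not> in_blocks h s s' 0" using blocks(1) unfolding in_blocks_def by (metis add_is_0 le_zero_eq not_gr0)
    then have "\<phi> 0 = x b" by (simp add: \<phi>_eq)
    moreover have "in_blocks h s s' (s' n + h - 1)" using blocks(2)[of n] unfolding in_blocks_def by (intro exI[of _ n]) auto
    then have "\<phi> (s' n + h - 1) = x (s' n - 1)" using blocks(2)[of n] by (simp add: \<phi>_eq)
    moreover have "s' n - 1 \<in> {s n..<s' n}" "Suc (s' n - 1) = s' n" using blocks(2)[of n] by auto
    then have "dist (f (x (s' n - 1))) (x b) \<le> \<theta>"
      using jump[of "s' n - 1" b] blocks(3,7)[of n] by (metis subsetD)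
    ultimately show "dist (f (\<phi> (s' n + h - 1))) (\<phi> 0) \<le> \<theta>" by simp
    show "n \<le> s' n + h - 1" using blocks(2)[of n] by simp
  qed
  ultimately obtain z where "z \<in> X" and z: "\<And>t. dist (\<phi> t) ((f ^^ t) z) \<le> \<epsilon>"
    using shadowing_of_returning_pseudo_orbit[OF ps] by blast
  have "dist (x t) ((f ^^ t) ((f ^^ h) z)) \<le> \<epsilon>" if "t \<in> {s n..<s' n}" for n t
  proof -
    have "in_blocks h s s' (t + h)" using that unfolding in_blocks_def by auto
    then show ?thesis using z[of "t + h"] by (simp add: \<phi>_eq funpow_apply_funpow add.commute)
  qed
  then show ?thesis using funpow_in \<open>z \<in> X\<close> by blast
qed

lemma thick_shadowing_if_periodic_shadowing:
  assumes ps: "periodic_shadowing X f"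
  shows "thick_shadowing X f"
  unfolding thick_shadowing_def
proof (intro allI impI)
  fix \<epsilon> :: real assume "\<epsilon> > 0"
  then obtain \<theta> where "\<theta> > 0" and \<theta>: "periodic_shadowing_at X f \<epsilon> \<theta>"
    using ps unfolding periodic_shadowing_def by blast
  have "\<exists>z\<in>X. thick {i. dist (x i) ((f ^^ i) z) \<le> \<epsilon>}"
    if x: "\<forall>i. x i \<in> X" and dense: "density_one {i. dist (f (x i)) (x (Suc i)) \<le> \<theta>/2}" for x
  proof -
    define A where "A = {i. dist (f (x i)) (x (Suc i)) \<le> \<theta>/2}"
    have "\<theta>/4 > 0" using \<open>\<theta> > 0\<close> by simp
    then obtain C where C: "finite C" "X \<subseteq> (\<Union>c\<in>C. ball c (\<theta>/4))"
      using compact unfolding compact_eq_totally_bounded by blast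
    have "\<exists>c\<in>C. dist c (x t) < \<theta>/4" for t
    proof -
      have "x t \<in> (\<Union>c\<in>C. ball c (\<theta>/4))" using C(2) x by blast
      then show ?thesis by simp
    qed
    then obtain \<kappa> where \<kappa>: "\<And>t. \<kappa> t \<in> C" "\<And>t. dist (\<kappa> t) (x t) < \<theta>/4" by metis
    have jump: "dist (f (x t)) (x c) \<le> \<theta>" if "t \<in> A" "\<kappa> (Suc t) = \<kappa> c" for t c
    proof -
      have "dist (\<kappa> c) (x (Suc t)) < \<theta>/4" using \<kappa>(2)[of "Suc t"] that(2) by simp
      then have "dist (x (Suc t)) (x c) < \<theta>/2"
        using \<kappa>(2)[of c] dist_triangle3[of "x (Suc t)" "x c" "\<kappa> c"] by linarith
      moreover have "dist (f (x t)) (x (Suc t)) \<le> \<theta>/2" using that(1) by (simp add: A_def)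
      ultimately show ?thesis using dist_triangle[of "f (x t)" "x c" "x (Suc t)"] by linarith
    qed
    obtain l b s s' r where cycle: "0 < l" "{b..<b+l} \<subseteq> A" "\<kappa> (b + l) = \<kappa> b"
      and blocks: "\<And>n. 0 < s n" "\<And>n. s n + n < s' n" "\<And>n. {s n..<s' n} \<subseteq> A"
        "\<And>n. s n mod l = r" "\<And>n. s' n mod l = r" "\<And>n. \<kappa> (s n) = \<kappa> b" "\<And>n. \<kappa> (s' n) = \<kappa> b"
      by (rule density_one_recurrent_blocks[of A C \<kappa>, OF dense[folded A_def] C(1) \<kappa>(1)]) blast
    obtain z where "z \<in> X" and z: "\<forall>n. \<forall>t\<in>{s n..<s' n}. dist (x t) ((f ^^ t) z) \<le> \<epsilon>"
      using shadowing_of_recurrent_blocks[where x=x and A=A and \<kappa>=\<kappa>, OF \<theta> x[rule_format] jump cycle blocks] by blast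
    have "{s n..s n + n} \<subseteq> {i. dist (x i) ((f ^^ i) z) \<le> \<epsilon>}" for n
    proof
      fix t assume "t \<in> {s n..s n + n}"
      then have "t \<in> {s n..<s' n}" using blocks(2)[of n] by auto
      then show "t \<in> {i. dist (x i) ((f ^^ i) z) \<le> \<epsilon>}" using z by blast
    qed
    then show ?thesis using \<open>z \<in> X\<close> unfolding thick_def by blast
  qed
  then show "\<exists>\<delta>>0. \<forall>x. (\<forall>i. x i \<in> X) \<and> density_one {i. dist (f (x i)) (x (Suc i)) \<le> \<delta>} \<longrightarrow>
      (\<exists>z\<in>X. thick {i. dist (x i) ((f ^^ i) z) \<le> \<epsilon>})"
    using \<open>\<theta> > 0\<close> by (intro exI[of _ "\<theta>/2"]) auto
qed

lemma asymptotically_shadowed_by_nonwandering: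
  assumes "periodic_shadowing X f" and "c_expansive X f \<or> equicontinuous X f"
    and "\<And>t. x t \<in> X" and "(\<lambda>t. dist (f (x t)) (x (Suc t))) \<longlonglongrightarrow> 0"
  shows "\<exists>y\<in>nonwandering X f. (\<lambda>t. dist (x t) ((f ^^ t) y)) \<longlonglongrightarrow> 0"
  using assms(2)
proof
  assume "c_expansive X f"
  then show ?thesis
    by (rule asymptotically_shadowed_if_c_expansive[where x=x])
      (rule eventually_shadowed_by_nonwandering[OF assms(1,3,4)])
next
  assume "equicontinuous X f"
  then show ?thesis
    by (rule asymptotically_shadowed_if_equicontinuous[where x=x])
      (rule eventually_shadowed_by_nonwandering[OF assms(1,3,4)])
qed

lemma limit_shadowing_if_periodic_shadowing:
  assumes "periodic_shadowing X f" and "c_expansive X f \<or> equicontinuous X f"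
  shows "limit_shadowing X f" and "limit_shadowing (nonwandering X f) f"
proof -
  have shadowed: "\<exists>y\<in>nonwandering X f. (\<lambda>i. dist (x i) ((f ^^ i) y)) \<longlonglongrightarrow> 0"
    if "\<forall>i. x i \<in> X" "(\<lambda>i. dist (f (x i)) (x (Suc i))) \<longlonglongrightarrow> 0" for x
    using asymptotically_shadowed_by_nonwandering[OF assms, of x] that by blast
  show "limit_shadowing X f"
    unfolding limit_shadowing_def using shadowed nonwandering_subset by blast
  show "limit_shadowing (nonwandering X f) f"
    unfolding limit_shadowing_def using shadowed nonwandering_subset by blast
qed

end

theorem corollary1p3:
  fixes X :: "'a::metric_space set" and f :: "'a \<Rightarrow> 'a"
  assumes "compact X"
    and "continuous_on X f" and "f ` X \<subseteq> X"
    and "c_expansive X f \<or> equicontinuous X f"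
  shows "(limit_shadowing X f \<longrightarrow> limit_shadowing (nonwandering X f) f)
    \<and> (limit_shadowing X f \<longleftrightarrow> thick_shadowing X f)"
proof -
  interpret compact_dynamical_system X f using assms(1-3) by unfold_locales
  note limit_shadowing = limit_shadowing_if_periodic_shadowing[OF _ assms(4)]
  show ?thesis
  proof (intro conjI impI iffI)
    assume "limit_shadowing X f"
    then have "periodic_shadowing X f" by (rule periodic_shadowing_if_limit_shadowing)
    then show "limit_shadowing (nonwandering X f) f" by (rule limit_shadowing(2))
    from \<open>periodic_shadowing X f\<close> show "thick_shadowing X f" by (rule thick_shadowing_if_periodic_shadowing)
  next
    assume "thick_shadowing X f"
    then show "limit_shadowing X f"
      by (rule limit_shadowing(1)[OF periodic_shadowing_if_thick_shadowing])
  qed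
qed

end
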